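(* Let $R$ be a commutative ring with unit, let $Q$ be a labelled quiver with labels $X$ and let $F\subseteq R\langle X\rangle_Q$. If $G\subseteq R\langle X\rangle_Q$ is a set of $Q$-consequences of $F$, then any $Q$-consequence of $G$ is also a $Q$-consequence of $F$.
   Context: $R\langle X\rangle$ is the free algebra of noncommutative polynomials over $R$ in indeterminates $X$, with monomials the words in $\langle X\rangle$ (including the empty word $1$); $\operatorname{supp}(f)$ is the set of monomials with nonzero coefficient. A labelled quiver $Q=(V,E,X,s,t,l)$ has vertices $V$, edges $E$, source/target maps $s,t:E\to V$ and labelling $l:E\to X$. A nonempty path $p=e_n\cdots e_1$ (with $s(e_{i+1})=t(e_i)$) has label $l(e_n)\cdots l(e_1)$, source $s(e_1)$, target $t(e_n)$; each vertex $v$ has an empty path with label $1$ and source and target $v$. For a monomial $m$, $\sigma(m)=\{(s(p),t(p)) : p \text{ a path with } l(p)=m\}$; for a polynomial $f$, $\sigma(f)=\bigcap_{m\in\operatorname{supp}(f)}\sigma(m)$ (so $\sigma(0)=V\times V$). $f$ is compatible with $Q$ if $\sigma(f)\neq\emptyset$, and uniformly compatible if it is compatible and all $m\in\operatorname{supp}(f)$ have the same set $\sigma(m)$; $R\langle X\rangle_Q$ is the set of uniformly compatible polynomials. For $F\subseteq R\langle X\rangle_Q$, a polynomial $f$ is a $Q$-consequence of $F$ if $f$ is compatible with $Q$ and there are finitely many $a_i,b_i\in R\langle X\rangle_Q$ and $f_i\in F$ with $f=\sum_i a_if_ib_i$ and $\sigma(a_if_ib_i)\supseteq\sigma(f)$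 for every $i$ (the empty sum is allowed). *)

theory Defs
  imports Main
begin

text \<open>Noncommutative polynomials over R in indeterminates of type 'x: functions from
words ('x list, the empty list being the empty word 1, concatenation being the product
of monomials) to coefficients.\<close>

type_synonym ('x, 'r) ncpoly = "'x list \<Rightarrow> 'r"

definition supp :: "('x, 'r::zero) ncpoly \<Rightarrow> 'x list set" where
  "supp f = {m. f m \<noteq> 0}"

definition free_alg :: "('x, 'r::zero) ncpoly set" where
  "free_alg = {f. finite (supp f)}"

definition ncmult :: "('x, 'r::comm_ring_1) ncpoly \<Rightarrow> ('x, 'r) ncpoly \<Rightarrow> ('x, 'r) ncpoly" where
  "ncmult f g = (\<lambda>m. \<Sum>(u, v) \<in> {(u, v). u @ v = m}. f u * g v)"

definition quiver :: "'v set \<Rightarrow> 'e set \<Rightarrow> ('e \<Rightarrow> 'v) \<Rightarrow> ('e \<Rightarrow> 'v) \<Rightarrow> bool" where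
  "quiver V E s t \<longleftrightarrow> (\<forall>e\<in>E. s e \<in> V \<and> t e \<in> V)"

text \<open>A nonempty path e_n ... e_1 is the list [e_n, ..., e_1] with s(e_{i+1}) = t(e_i);
its label is l(e_n) ... l(e_1), its source s(e_1) and its target t(e_n).\<close>

definition is_path :: "'e set \<Rightarrow> ('e \<Rightarrow> 'v) \<Rightarrow> ('e \<Rightarrow> 'v) \<Rightarrow> 'e list \<Rightarrow> bool" where
  "is_path E s t p \<longleftrightarrow> p \<noteq> [] \<and> set p \<subseteq> E \<and>
     (\<forall>i. Suc i < length p \<longrightarrow> s (p ! i) = t (p ! Suc i))"

definition sigma_mon ::
  "'v set \<Rightarrow> 'e set \<Rightarrow> ('e \<Rightarrow> 'v) \<Rightarrow> ('e \<Rightarrow> 'v) \<Rightarrow> ('e \<Rightarrow> 'x) \<Rightarrow> 'x list \<Rightarrow> ('v \<times> 'v) set" where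
  "sigma_mon V E s t l m =
     {(v, v) | v. v \<in> V \<and> m = []} \<union>
     {(s (last p), t (hd p)) | p. is_path E s t p \<and> map l p = m}"

definition sigma ::
  "'v set \<Rightarrow> 'e set \<Rightarrow> ('e \<Rightarrow> 'v) \<Rightarrow> ('e \<Rightarrow> 'v) \<Rightarrow> ('e \<Rightarrow> 'x) \<Rightarrow> ('x, 'r::zero) ncpoly \<Rightarrow> ('v \<times> 'v) set" where
  "sigma V E s t l f = {uv \<in> V \<times> V. \<forall>m \<in> supp f. uv \<in> sigma_mon V E s t l m}"

definition compatible ::
  "'v set \<Rightarrow> 'e set \<Rightarrow> ('e \<Rightarrow> 'v) \<Rightarrow> ('e \<Rightarrow> 'v) \<Rightarrow> ('e \<Rightarrow> 'x) \<Rightarrow> ('x, 'r::zero) ncpoly \<Rightarrow> bool" where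
  "compatible V E s t l f \<longleftrightarrow> sigma V E s t l f \<noteq> {}"

definition unif_compatible ::
  "'v set \<Rightarrow> 'e set \<Rightarrow> ('e \<Rightarrow> 'v) \<Rightarrow> ('e \<Rightarrow> 'v) \<Rightarrow> ('e \<Rightarrow> 'x) \<Rightarrow> ('x, 'r::zero) ncpoly \<Rightarrow> bool" where
  "unif_compatible V E s t l f \<longleftrightarrow> compatible V E s t l f \<and>
     (\<forall>m \<in> supp f. \<forall>m' \<in> supp f. sigma_mon V E s t l m = sigma_mon V E s t l m')"

definition RXQ ::
  "'v set \<Rightarrow> 'e set \<Rightarrow> ('e \<Rightarrow> 'v) \<Rightarrow> ('e \<Rightarrow> 'v) \<Rightarrow> ('e \<Rightarrow> 'x) \<Rightarrow> ('x, 'r::zero) ncpoly set" where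
  "RXQ V E s t l = {f \<in> free_alg. unif_compatible V E s t l f}"

definition Q_consequence ::
  "'v set \<Rightarrow> 'e set \<Rightarrow> ('e \<Rightarrow> 'v) \<Rightarrow> ('e \<Rightarrow> 'v) \<Rightarrow> ('e \<Rightarrow> 'x) \<Rightarrow>
   ('x, 'r::comm_ring_1) ncpoly set \<Rightarrow> ('x, 'r) ncpoly \<Rightarrow> bool" where
  "Q_consequence V E s t l F f \<longleftrightarrow>
     f \<in> free_alg \<and> compatible V E s t l f \<and>
     (\<exists>(n::nat) a fs b.
        (\<forall>i<n. a i \<in> RXQ V E s t l \<and> b i \<in> RXQ V E s t l \<and> fs i \<in> F \<and>
               sigma V E s t l f \<subseteq> sigma V E s t l (ncmult (ncmult (a i) (fs i)) (b i))) \<and>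
        f = (\<lambda>m. \<Sum>i<n. ncmult (ncmult (a i) (fs i)) (b i) m))"

end

theory Submission
  imports Defs
begin

text \<open>A \<open>Q\<close>-consequence of \<open>G\<close> is a sum of terms \<open>a g b\<close> with \<open>g \<in> G\<close>; expanding each \<open>g\<close>
as a sum of terms \<open>c h d\<close> with \<open>h \<in> F\<close> turns \<open>a g b\<close> into a sum of terms \<open>(a c) h (d b)\<close>.
These are admissible because \<open>\<sigma>\<close> is multiplicative on nonzero products of uniformly compatible
polynomials, \<open>\<sigma>(p q) = \<sigma>(q) \<circ> \<sigma>(p)\<close>: hence
\<open>\<sigma>(a c h d b) = \<sigma>(b) \<circ> \<sigma>(c h d) \<circ> \<sigma>(a) \<supseteq> \<sigma>(b) \<circ> \<sigma>(g) \<circ> \<sigma>(a) = \<sigma>(a g b) \<supseteq> \<sigma>(f)\<close>,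
and since \<open>\<sigma>(f) \<noteq> {}\<close> also \<open>\<sigma>(a c)\<close> and \<open>\<sigma>(d b)\<close> are nonempty, i.e. \<open>a c, d b \<in> R\<langle>X\<rangle>\<^sub>Q\<close>.
Vanishing terms are simply dropped.\<close>

notation ncmult (infixl "\<odot>" 70)

lemma splittings_eq_image: "{(u, v). u @ v = m} = (\<lambda>k. (take k m, drop k m)) ` {..length m}"
proof safe
  fix u v assume "m = u @ v"
  then show "(u, v) \<in> (\<lambda>k. (take k (u @ v), drop k (u @ v))) ` {..length (u @ v)}"
    by (intro image_eqI[where x = "length u"]) auto
qed auto

lemma finite_splittings: "finite {(u, v). u @ v = m}"
  unfolding splittings_eq_image by simp

lemma ncmult_left_nested_eq:
  "(f \<odot> g \<odot> h) m = (\<Sum>(u, v, w) \<in> {(u, v, w). u @ v @ w = m}. f u * g v * h w)"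
proof -
  have "(f \<odot> g \<odot> h) m = (\<Sum>(x, w) \<in> {(x, w). x @ w = m}. \<Sum>(u, v) \<in> {(u, v). u @ v = x}. f u * g v * h w)"
    by (simp add: ncmult_def sum_distrib_right case_prod_unfold)
  also have "\<dots> = (\<Sum>(xw, uv) \<in> Sigma {(x, w). x @ w = m} (\<lambda>xw. {(u, v). u @ v = fst xw}).
                         f (fst uv) * g (snd uv) * h (snd xw))"
    by (subst sum.Sigma[symmetric]) (auto simp: finite_splittings finite_splittings[unfolded case_prod_unfold] case_prod_unfold)
  also have "\<dots> = (\<Sum>(u, v, w) \<in> {(u, v, w). u @ v @ w = m}. f u * g v * h w)"
    by (rule sum.reindex_bij_witness[where i = "\<lambda>(u, v, w). ((u @ v, w), (u, v))"
          and j = "\<lambda>((x, w), (u, v)). (u, v, w)"]) auto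
  finally show ?thesis .
qed

lemma ncmult_right_nested_eq:
  "(f \<odot> (g \<odot> h)) m = (\<Sum>(u, v, w) \<in> {(u, v, w). u @ v @ w = m}. f u * g v * h w)"
proof -
  have "(f \<odot> (g \<odot> h)) m = (\<Sum>(u, x) \<in> {(u, x). u @ x = m}. \<Sum>(v, w) \<in> {(v, w). v @ w = x}. f u * g v * h w)"
    by (simp add: ncmult_def sum_distrib_left case_prod_unfold mult.assoc)
  also have "\<dots> = (\<Sum>(ux, vw) \<in> Sigma {(u, x). u @ x = m} (\<lambda>ux. {(v, w). v @ w = snd ux}).
                         f (fst ux) * g (fst vw) * h (snd vw))"
    by (subst sum.Sigma[symmetric]) (auto simp: finite_splittings finite_splittings[unfolded case_prod_unfold] case_prod_unfold)
  also have "\<dots> = (\<Sum>(u, v, w) \<in> {(u, v, w). u @ v @ w = m}. f u * g v * h w)"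
    by (rule sum.reindex_bij_witness[where i = "\<lambda>(u, v, w). ((u, v @ w), (v, w))"
          and j = "\<lambda>((u, x), (v, w)). (u, v, w)"]) auto
  finally show ?thesis .
qed

lemma ncmult_assoc: "f \<odot> g \<odot> h = f \<odot> (g \<odot> h)"
  by (rule ext) (simp add: ncmult_left_nested_eq ncmult_right_nested_eq)

lemma ncmult_sum_right: "f \<odot> (\<lambda>m. \<Sum>j\<in>J. g j m) = (\<lambda>m. \<Sum>j\<in>J. (f \<odot> g j) m)"
  by (rule ext) (simp add: ncmult_def sum_distrib_left case_prod_unfold sum.swap[of _ J])

lemma ncmult_sum_left: "(\<lambda>m. \<Sum>j\<in>J. g j m) \<odot> f = (\<lambda>m. \<Sum>j\<in>J. (g j \<odot> f) m)"
  by (rule ext) (simp add: ncmult_def sum_distrib_right case_prod_unfold sum.swap[of _ J])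

lemma ncmult_zero_left: "(\<lambda>m. 0) \<odot> f = (\<lambda>m. 0)"
  by (rule ext) (simp add: ncmult_def)

lemma supp_ncmultE:
  assumes "m \<in> supp (f \<odot> g)"
  obtains u v where "m = u @ v" "u \<in> supp f" "v \<in> supp g"
proof -
  have "\<exists>u v. m = u @ v \<and> u \<in> supp f \<and> v \<in> supp g"
  proof (rule ccontr)
    assume "\<nexists>u v. m = u @ v \<and> u \<in> supp f \<and> v \<in> supp g"
    then have "(f \<odot> g) m = 0"
      unfolding ncmult_def by (intro sum.neutral) (force simp: supp_def)
    with assms show False by (simp add: supp_def)
  qed
  with that show thesis by blast
qed

lemma finite_supp_ncmult:
  assumes "finite (supp f)" "finite (supp g)"
  shows "finite (supp (f \<odot> g))"
proof (rule finite_subset)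
  show "supp (f \<odot> g) \<subseteq> (\<lambda>(u, v). u @ v) ` (supp f \<times> supp g)"
    by (auto elim!: supp_ncmultE)
qed (use assms in simp)

lemma sum_lessThan_add_nat: "(\<Sum>i<n + k. \<phi> i) = (\<Sum>i<n. \<phi> i) + (\<Sum>i<k. \<phi> (n + i))" for n k :: nat
  by (induction k) (simp_all add: add.assoc)

lemma is_path_Cons:
  "is_path E s t (e # p) \<longleftrightarrow> e \<in> E \<and> (p = [] \<or> is_path E s t p \<and> s e = t (hd p))"
proof (cases p)
  case (Cons e' q)
  have "(\<forall>i. Suc i < length (e # p) \<longrightarrow> s ((e # p) ! i) = t ((e # p) ! Suc i)) \<longleftrightarrow>
        s e = t e' \<and> (\<forall>i. Suc i < length p \<longrightarrow> s (p ! i) = t (p ! Suc i))"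
    using Cons by (auto simp: less_Suc_eq_0_disj)
  then show ?thesis using Cons by (auto simp: is_path_def)
qed (simp add: is_path_def)

lemma is_path_append:
  assumes "p \<noteq> []" "q \<noteq> []"
  shows "is_path E s t (p @ q) \<longleftrightarrow> is_path E s t p \<and> is_path E s t q \<and> s (last p) = t (hd q)"
  using assms by (induction p rule: list_nonempty_induct) (auto simp: is_path_Cons)

locale labelled_quiver =
  fixes V :: "'v set" and E :: "'e set" and s t :: "'e \<Rightarrow> 'v" and l :: "'e \<Rightarrow> 'x"
  assumes quiver: "quiver V E s t"
begin

abbreviation \<sigma>\<^sub>m :: "'x list \<Rightarrow> ('v \<times> 'v) set" where
  "\<sigma>\<^sub>m \<equiv> sigma_mon V E s t l"

abbreviation \<sigma> where
  "\<sigma> \<equiv> sigma V E s t l"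

lemma sigma_mon_subset: "\<sigma>\<^sub>m m \<subseteq> V \<times> V"
proof -
  have "s (last p) \<in> V \<and> t (hd p) \<in> V" if "is_path E s t p" for p
    using that quiver unfolding quiver_def is_path_def by (meson hd_in_set last_in_set subsetD)
  then show ?thesis unfolding sigma_mon_def by fastforce
qed

lemma sigma_mon_Nil: "\<sigma>\<^sub>m [] = Id_on V"
  unfolding sigma_mon_def is_path_def by (auto simp: Id_on_def)

text \<open>Paths are read from right to left, hence the reversed order of composition.\<close>

lemma sigma_mon_append: "\<sigma>\<^sub>m (u @ v) = \<sigma>\<^sub>m v O \<sigma>\<^sub>m u"
proof (cases "u = [] \<or> v = []")
  case True
  then show ?thesis using sigma_mon_subset by (auto simp: sigma_mon_Nil) blast+
next
  case False
  then have uv: "u \<noteq> []" "v \<noteq> []" by auto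
  show ?thesis
  proof safe
    fix x z assume "(x, z) \<in> \<sigma>\<^sub>m (u @ v)"
    then obtain p where p: "is_path E s t p" "map l p = u @ v" "x = s (last p)" "z = t (hd p)"
      using uv by (auto simp: sigma_mon_def)
    then obtain p1 p2 where pp: "p = p1 @ p2" "map l p1 = u" "map l p2 = v"
      by (auto simp: map_eq_append_conv)
    then have ne: "p1 \<noteq> []" "p2 \<noteq> []" using uv by auto
    with p pp have path: "is_path E s t p1" "is_path E s t p2" "s (last p1) = t (hd p2)"
      using is_path_append by blast+
    with p pp ne have "(x, t (hd p2)) \<in> \<sigma>\<^sub>m v"
      unfolding sigma_mon_def by auto
    moreover from p pp ne path have "(t (hd p2), z) \<in> \<sigma>\<^sub>m u"
      unfolding sigma_mon_def by (auto intro!: exI[where x = p1])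
    ultimately show "(x, z) \<in> \<sigma>\<^sub>m v O \<sigma>\<^sub>m u" by blast
  next
    fix x y z assume "(x, y) \<in> \<sigma>\<^sub>m v" "(y, z) \<in> \<sigma>\<^sub>m u"
    then obtain p1 p2 where p1: "is_path E s t p1" "map l p1 = u" "y = s (last p1)" "z = t (hd p1)"
      and p2: "is_path E s t p2" "map l p2 = v" "x = s (last p2)" "y = t (hd p2)"
      using uv unfolding sigma_mon_def by blast
    then have ne: "p1 \<noteq> []" "p2 \<noteq> []" by (auto simp: is_path_def)
    with p1 p2 have "is_path E s t (p1 @ p2)" using is_path_append by blast
    with p1 p2 ne show "(x, z) \<in> \<sigma>\<^sub>m (u @ v)"
      unfolding sigma_mon_def by (auto intro!: exI[where x = "p1 @ p2"])
  qed
qed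

definition uniform :: "('x, 'r::zero) ncpoly \<Rightarrow> bool" where
  "uniform f \<longleftrightarrow> (\<forall>m \<in> supp f. \<forall>m' \<in> supp f. \<sigma>\<^sub>m m = \<sigma>\<^sub>m m')"

lemma RXQ_iff: "f \<in> RXQ V E s t l \<longleftrightarrow> finite (supp f) \<and> uniform f \<and> \<sigma> f \<noteq> {}"
  unfolding RXQ_def free_alg_def unif_compatible_def compatible_def uniform_def by blast

lemma sigma_eq_sigma_mon:
  assumes "uniform f" "m \<in> supp f"
  shows "\<sigma> f = \<sigma>\<^sub>m m"
  using assms sigma_mon_subset unfolding sigma_def uniform_def by blast

lemma uniform_ncmult:
  assumes "uniform f" "uniform g"
  shows "uniform (f \<odot> g)"
  unfolding uniform_def
proof (intro ballI)
  fix m m' assume "m \<in> supp (f \<odot> g)" "m' \<in> supp (f \<odot> g)"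
  then obtain u v u' v' where "m = u @ v" "m' = u' @ v'"
    and "u \<in> supp f" "u' \<in> supp f" "v \<in> supp g" "v' \<in> supp g"
    by (auto elim!: supp_ncmultE)
  moreover have "\<sigma>\<^sub>m u = \<sigma>\<^sub>m u'" "\<sigma>\<^sub>m v = \<sigma>\<^sub>m v'"
    using assms \<open>u \<in> supp f\<close> \<open>u' \<in> supp f\<close> \<open>v \<in> supp g\<close> \<open>v' \<in> supp g\<close>
    unfolding uniform_def by blast+
  ultimately show "\<sigma>\<^sub>m m = \<sigma>\<^sub>m m'"
    by (simp add: sigma_mon_append)
qed

lemma sigma_ncmult:
  assumes "uniform f" "uniform g" "f \<odot> g \<noteq> (\<lambda>m. 0)"
  shows "\<sigma> (f \<odot> g) = \<sigma> g O \<sigma> f"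
proof -
  obtain m where m: "m \<in> supp (f \<odot> g)"
    using assms(3) by (auto simp: supp_def)
  then obtain u v where "m = u @ v" "u \<in> supp f" "v \<in> supp g"
    by (rule supp_ncmultE)
  with m assms have "\<sigma> (f \<odot> g) = \<sigma>\<^sub>m v O \<sigma>\<^sub>m u"
    using sigma_eq_sigma_mon uniform_ncmult sigma_mon_append by metis
  also have "\<dots> = \<sigma> g O \<sigma> f"
    using assms \<open>u \<in> supp f\<close> \<open>v \<in> supp g\<close> by (simp add: sigma_eq_sigma_mon)
  finally show ?thesis .
qed

lemma RXQ_ncmult:
  assumes "f \<in> RXQ V E s t l" "g \<in> RXQ V E s t l" "\<sigma> (f \<odot> g) \<noteq> {}"
  shows "f \<odot> g \<in> RXQ V E s t l"
  using assms by (simp add: RXQ_iff finite_supp_ncmult uniform_ncmult)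

lemma sigma_ncmult3:
  assumes "uniform a" "uniform h" "uniform b" "a \<odot> h \<odot> b \<noteq> (\<lambda>m. 0)"
  shows "\<sigma> (a \<odot> h \<odot> b) = \<sigma> b O \<sigma> h O \<sigma> a"
proof -
  have "a \<odot> h \<noteq> (\<lambda>m. 0)"
    using assms(4) by (auto simp: ncmult_zero_left)
  with assms show ?thesis
    by (simp add: sigma_ncmult uniform_ncmult)
qed

lemma sandwich_term_admissible:
  assumes RXQ: "a \<in> RXQ V E s t l" "b \<in> RXQ V E s t l" "g \<in> RXQ V E s t l"
    "c \<in> RXQ V E s t l" "h \<in> RXQ V E s t l" "d \<in> RXQ V E s t l"
    and g_le: "\<sigma> g \<subseteq> \<sigma> (c \<odot> h \<odot> d)"
    and S: "S \<subseteq> \<sigma> (a \<odot> g \<odot> b)" "S \<noteq> {}"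
    and nonzero: "a \<odot> g \<odot> b \<noteq> (\<lambda>m. 0)" "a \<odot> c \<odot> h \<odot> (d \<odot> b) \<noteq> (\<lambda>m. 0)"
  shows "a \<odot> c \<in> RXQ V E s t l" "d \<odot> b \<in> RXQ V E s t l" "S \<subseteq> \<sigma> (a \<odot> c \<odot> h \<odot> (d \<odot> b))"
proof -
  have U: "uniform a" "uniform b" "uniform g" "uniform c" "uniform h" "uniform d"
    using RXQ by (simp_all add: RXQ_iff)
  let ?P = "a \<odot> c \<odot> h \<odot> (d \<odot> b)"
  have P_eq: "?P = a \<odot> (c \<odot> h \<odot> d) \<odot> b"
    by (simp add: ncmult_assoc)
  have "\<sigma> (a \<odot> g \<odot> b) = \<sigma> b O \<sigma> g O \<sigma> a"
    using nonzero(1) U by (simp add: sigma_ncmult3)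
  also have "\<dots> \<subseteq> \<sigma> b O \<sigma> (c \<odot> h \<odot> d) O \<sigma> a"
    using g_le by (intro relcomp_mono) auto
  also have "\<dots> = \<sigma> ?P"
    using nonzero(2) U unfolding P_eq by (simp add: sigma_ncmult3 uniform_ncmult)
  finally show S_le: "S \<subseteq> \<sigma> ?P"
    using S(1) by blast
  have "\<sigma> ?P = \<sigma> (d \<odot> b) O \<sigma> h O \<sigma> (a \<odot> c)"
    using nonzero(2) U by (simp add: sigma_ncmult3 uniform_ncmult)
  with S_le S(2) have "\<sigma> (a \<odot> c) \<noteq> {}" "\<sigma> (d \<odot> b) \<noteq> {}"
    by auto
  with RXQ show "a \<odot> c \<in> RXQ V E s t l" "d \<odot> b \<in> RXQ V E s t l"
    by (simp_all add: RXQ_ncmult)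
qed

definition Q_combination ::
  "('x, 'r::comm_ring_1) ncpoly set \<Rightarrow> ('v \<times> 'v) set \<Rightarrow> ('x, 'r) ncpoly \<Rightarrow> bool" where
  "Q_combination F S f \<longleftrightarrow> (\<exists>(n::nat) a h b.
     (\<forall>i<n. a i \<in> RXQ V E s t l \<and> b i \<in> RXQ V E s t l \<and> h i \<in> F \<and> S \<subseteq> \<sigma> (a i \<odot> h i \<odot> b i)) \<and>
     f = (\<lambda>m. \<Sum>i<n. (a i \<odot> h i \<odot> b i) m))"

lemma Q_consequence_iff:
  "Q_consequence V E s t l F f \<longleftrightarrow> f \<in> free_alg \<and> compatible V E s t l f \<and> Q_combination F (\<sigma> f) f"
  unfolding Q_consequence_def Q_combination_def ..

lemma Q_combination_zero: "Q_combination F S (\<lambda>m. 0)"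
  unfolding Q_combination_def by (intro exI[of _ 0]) simp

lemma Q_combination_term:
  assumes "a \<in> RXQ V E s t l" "b \<in> RXQ V E s t l" "h \<in> F" "S \<subseteq> \<sigma> (a \<odot> h \<odot> b)"
  shows "Q_combination F S (a \<odot> h \<odot> b)"
  unfolding Q_combination_def
  using assms by (intro exI[of _ 1] exI[of _ "\<lambda>_. a"] exI[of _ "\<lambda>_. h"] exI[of _ "\<lambda>_. b"]) auto

lemma Q_combination_add:
  fixes f g :: "('x, 'r::comm_ring_1) ncpoly"
  assumes "Q_combination F S f" "Q_combination F S g"
  shows "Q_combination F S (\<lambda>m. f m + g m)"
proof -
  obtain n :: nat and a h b where
    f: "\<forall>i<n. a i \<in> RXQ V E s t l \<and> b i \<in> RXQ V E s t l \<and> h i \<in> F \<and> S \<subseteq> \<sigma> (a i \<odot> h i \<odot> b i)"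
       "f = (\<lambda>m. \<Sum>i<n. (a i \<odot> h i \<odot> b i) m)"
    using assms(1) unfolding Q_combination_def by blast
  obtain k :: nat and a' h' b' where
    g: "\<forall>i<k. a' i \<in> RXQ V E s t l \<and> b' i \<in> RXQ V E s t l \<and> h' i \<in> F \<and> S \<subseteq> \<sigma> (a' i \<odot> h' i \<odot> b' i)"
       "g = (\<lambda>m. \<Sum>i<k. (a' i \<odot> h' i \<odot> b' i) m)"
    using assms(2) unfolding Q_combination_def by blast
  define join :: "(nat \<Rightarrow> ('x, 'r) ncpoly) \<Rightarrow> (nat \<Rightarrow> ('x, 'r) ncpoly) \<Rightarrow> nat \<Rightarrow> ('x, 'r) ncpoly"
    where "join p q i = (if i < n then p i else q (i - n))" for p q i
  have "\<forall>i<n + k. join a a' i \<in> RXQ V E s t l \<and> join b b' i \<in> RXQ V E s t l \<and> join h h' i \<in> F \<and>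
      S \<subseteq> \<sigma> (join a a' i \<odot> join h h' i \<odot> join b b' i)"
    using f(1) g(1) by (auto simp: join_def)
  moreover have "(\<lambda>m. f m + g m) = (\<lambda>m. \<Sum>i<n + k. (join a a' i \<odot> join h h' i \<odot> join b b' i) m)"
    unfolding f(2) g(2) sum_lessThan_add_nat by (simp add: join_def)
  ultimately show ?thesis
    unfolding Q_combination_def by blast
qed

lemma Q_combination_sum:
  assumes "finite J" "\<And>j. j \<in> J \<Longrightarrow> Q_combination F S (g j)"
  shows "Q_combination F S (\<lambda>m. \<Sum>j\<in>J. g j m)"
  using assms by (induction J rule: finite_induct) (simp_all add: Q_combination_zero Q_combination_add)

lemma Q_combination_sandwich:
  assumes F: "F \<subseteq> RXQ V E s t l"
    and RXQ: "a \<in> RXQ V E s t l" "b \<in> RXQ V E s t l" "g \<in> RXQ V E s t l"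
    and g: "Q_combination F (\<sigma> g) g"
    and S: "S \<subseteq> \<sigma> (a \<odot> g \<odot> b)" "S \<noteq> {}"
  shows "Q_combination F S (a \<odot> g \<odot> b)"
proof (cases "a \<odot> g \<odot> b = (\<lambda>m. 0)")
  case True
  then show ?thesis by (simp add: Q_combination_zero)
next
  case nonzero: False
  obtain k :: nat and c h d where
    chd: "\<And>j. j < k \<Longrightarrow>
      c j \<in> RXQ V E s t l \<and> d j \<in> RXQ V E s t l \<and> h j \<in> F \<and> \<sigma> g \<subseteq> \<sigma> (c j \<odot> h j \<odot> d j)"
    and g_eq: "g = (\<lambda>m. \<Sum>j<k. (c j \<odot> h j \<odot> d j) m)"
    using g unfolding Q_combination_def by blast
  have agb_eq: "a \<odot> g \<odot> b = (\<lambda>m. \<Sum>j<k. (a \<odot> c j \<odot> h j \<odot> (d j \<odot> b)) m)"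
    unfolding g_eq by (simp add: ncmult_sum_left ncmult_sum_right ncmult_assoc)
  have terms: "Q_combination F S (a \<odot> c j \<odot> h j \<odot> (d j \<odot> b))" if "j < k" for j
  proof (cases "a \<odot> c j \<odot> h j \<odot> (d j \<odot> b) = (\<lambda>m. 0)")
    \<comment> \<open>a vanishing term must be dropped: its factor \<open>a \<odot> c j\<close> need not be compatible\<close>
    case True
    then show ?thesis by (simp add: Q_combination_zero)
  next
    case False
    with chd[OF that] F RXQ S nonzero show ?thesis
      by (intro Q_combination_term sandwich_term_admissible) auto
  qed
  show ?thesis
    unfolding agb_eq by (rule Q_combination_sum) (simp_all add: terms)
qed

lemma Q_combination_trans:
  assumes "F \<subseteq> RXQ V E s t l" "G \<subseteq> RXQ V E s t l"
    and "\<And>g. g \<in> G \<Longrightarrow> Q_combination F (\<sigma> g) g"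
    and "Q_combination G S f" "S \<noteq> {}"
  shows "Q_combination F S f"
proof -
  obtain n :: nat and a g b where
    agb: "\<And>i. i < n \<Longrightarrow>
      a i \<in> RXQ V E s t l \<and> b i \<in> RXQ V E s t l \<and> g i \<in> G \<and> S \<subseteq> \<sigma> (a i \<odot> g i \<odot> b i)"
    and f_eq: "f = (\<lambda>m. \<Sum>i<n. (a i \<odot> g i \<odot> b i) m)"
    using assms(4) unfolding Q_combination_def by blast
  have terms: "Q_combination F S (a i \<odot> g i \<odot> b i)" if "i < n" for i
    using agb[OF that] assms(1,2,3,5) by (intro Q_combination_sandwich) auto
  show ?thesis
    unfolding f_eq by (rule Q_combination_sum) (simp_all add: terms)
qed

end

theorem corollary4p4:
  fixes V :: "'v set" and E :: "'e set" and s t :: "'e \<Rightarrow> 'v" and l :: "'e \<Rightarrow> 'x"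
    and F G :: "('x, 'r::comm_ring_1) ncpoly set" and f :: "('x, 'r) ncpoly"
  assumes "quiver V E s t"
    and "F \<subseteq> RXQ V E s t l"
    and "G \<subseteq> RXQ V E s t l"
    and "\<forall>g \<in> G. Q_consequence V E s t l F g"
    and "Q_consequence V E s t l G f"
  shows "Q_consequence V E s t l F f"
proof -
  interpret labelled_quiver V E s t l
    using assms(1) by unfold_locales
  have G: "\<And>g. g \<in> G \<Longrightarrow> Q_combination F (\<sigma> g) g"
    using assms(4) by (simp add: Q_consequence_iff)
  have f: "f \<in> free_alg" "compatible V E s t l f" "Q_combination G (\<sigma> f) f"
    using assms(5) by (simp_all add: Q_consequence_iff)
  then have "\<sigma> f \<noteq> {}"
    by (simp add: compatible_def)
  then have "Q_combination F (\<sigma> f) f"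
    using Q_combination_trans[OF assms(2,3) G f(3)] by blast
  with f show ?thesis
    by (simp add: Q_consequence_iff)
qed

end
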